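(* Let $\tau=(1,\tau)\sigma\in W$. For $x\in\mathbb Z_2$ define $\tau^x\in W$ recursively by $\tau^x=(\tau^{x/2},\tau^{x/2})$ if $x\in2\mathbb Z_2$ and $\tau^x=(\tau^{(x-1)/2},\tau^{(x+1)/2})\sigma$ if $x\in2\mathbb Z_2+1$, and let $T=\{\tau^x:x\in\mathbb Z_2\}$ (the closure of $\langle\tau\rangle$). For $x\in\mathbb Z_2^\times$ define $u_x\in W$ recursively by $u_x=(u_x,u_x\tau^{(x-1)/2})$, let $U=\{u_x:x\in\mathbb Z_2^\times\}$ and $A=TU$. Then $N_W(T)=A$ and $N_W(A)=A$.
   Context: $W$ is the isometry group of the binary rooted tree $\{0,1\}^*$. Elements are written $(g_0,g_1)\pi$, $\pi\in\mathrm{Sym}(\{0,1\})$, meaning $(xw)^{(g_0,g_1)\pi}=x^\pi w^{g_x}$; $\sigma$ is the transposition acting rigidly at the root. $\mathbb Z_2$ is the ring of $2$-adic integers and $\mathbb Z_2^\times$ its group of units. *)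

theory Defs
  imports "HOL-Algebra.Group_Action"
begin

text \<open>Vertices of the binary rooted tree are finite words over {0,1}, encoded as
  bool lists (False = 0, True = 1).  Following the paper, W acts on the right:
  the word w is mapped to w^g, and the product g h means "first g, then h".\<close>

definition tree_isometries :: "(bool list \<Rightarrow> bool list) set" where
  "tree_isometries = {f. bij f \<and> (\<forall>w n. f (take n w) = take n (f w))
                              \<and> (\<forall>w. length (f w) = length w)}"

definition W :: "(bool list \<Rightarrow> bool list) monoid" where
  "W = \<lparr>carrier = tree_isometries, mult = (\<lambda>g h. h \<circ> g), one = id\<rparr>"

text \<open>A 2-adic integer is represented by its coherent sequence of residues
  x n \<in> {0..<2^n} (the image of x in Z/2^n Z), with x n = x (n+1) mod 2^n.\<close>

definition Z2 :: "(nat \<Rightarrow> int) set" where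
  "Z2 = {x. \<forall>n. 0 \<le> x n \<and> x n < 2 ^ n \<and> x n = x (Suc n) mod 2 ^ n}"

definition z2_of_int :: "int \<Rightarrow> nat \<Rightarrow> int" where
  "z2_of_int k = (\<lambda>n. k mod 2 ^ n)"

definition z2_add :: "(nat \<Rightarrow> int) \<Rightarrow> (nat \<Rightarrow> int) \<Rightarrow> nat \<Rightarrow> int" where
  "z2_add x y = (\<lambda>n. (x n + y n) mod 2 ^ n)"

definition z2_mult :: "(nat \<Rightarrow> int) \<Rightarrow> (nat \<Rightarrow> int) \<Rightarrow> nat \<Rightarrow> int" where
  "z2_mult x y = (\<lambda>n. (x n * y n) mod 2 ^ n)"

definition z2_even :: "(nat \<Rightarrow> int) \<Rightarrow> bool" where
  "z2_even x \<longleftrightarrow> (\<exists>y\<in>Z2. z2_add y y = x)"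

definition z2_half :: "(nat \<Rightarrow> int) \<Rightarrow> nat \<Rightarrow> int" where
  "z2_half x = (THE y. y \<in> Z2 \<and> z2_add y y = x)"

definition Z2_units :: "(nat \<Rightarrow> int) set" where
  "Z2_units = {x \<in> Z2. \<exists>y\<in>Z2. z2_mult x y = z2_of_int 1}"

text \<open>tau^x = (tau^{x/2}, tau^{x/2}) for x \<in> 2Z_2 and
  tau^x = (tau^{(x-1)/2}, tau^{(x+1)/2}) sigma for x \<in> 2Z_2+1,
  given through its action on words: (b w)^{(g0,g1)\<pi>} = b^\<pi> w^{g_b}.\<close>

fun tau_pow :: "(nat \<Rightarrow> int) \<Rightarrow> bool list \<Rightarrow> bool list" where
  "tau_pow x [] = []"
| "tau_pow x (b # w) =
     (if z2_even x then b # tau_pow (z2_half x) w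
      else if b then False # tau_pow (z2_half (z2_add x (z2_of_int 1))) w
      else True # tau_pow (z2_half (z2_add x (z2_of_int (-1)))) w)"

definition T :: "(bool list \<Rightarrow> bool list) set" where
  "T = tau_pow ` Z2"

text \<open>u_x = (u_x, u_x tau^{(x-1)/2}) for x \<in> Z_2^\<times>; the product u_x tau^y means
  first u_x, then tau^y (right action).\<close>

fun u_elt :: "(nat \<Rightarrow> int) \<Rightarrow> bool list \<Rightarrow> bool list" where
  "u_elt x [] = []"
| "u_elt x (b # w) =
     (if b then True # tau_pow (z2_half (z2_add x (z2_of_int (-1)))) (u_elt x w)
      else False # u_elt x w)"

definition U :: "(bool list \<Rightarrow> bool list) set" where
  "U = u_elt ` Z2_units"

definition A :: "(bool list \<Rightarrow> bool list) set" where
  "A = T <#>\<^bsub>W\<^esub> U"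

end

theory Submission
  imports Defs
begin

text \<open>
  Reading a word of length n as a binary number, least significant digit first, identifies
  level n of the tree with \<open>\<int>/2\<^sup>n\<close>. In these coordinates \<open>\<tau>\<^sup>x\<close> is \<open>v \<mapsto> v + x\<close>
  and \<open>u\<^sub>x\<close> is \<open>v \<mapsto> x v\<close>, so T is the group of 2-adic translations and A the group of
  affine maps \<open>v \<mapsto> a v + b\<close> with a a unit.

  If g conjugates \<open>\<tau>\<close> into T, say \<open>g\<inverse> \<tau> g = \<tau>\<^sup>b\<close>, then \<open>g(v + 1) = g(v) + b\<close>, so g is
  affine with slope b; if \<open>g \<tau> g\<inverse>\<close> is a translation as well, b is a unit and g lies in A.
  Conversely A normalizes T by a direct computation, which gives \<open>N\<^sub>W(T) = A\<close>.

  For \<open>N\<^sub>W(A)\<close>: commutators of affine maps are translations, and \<open>\<tau>\<^sup>2\<close> is the commutator of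
  \<open>\<tau>\<close> and \<open>u\<^sub>-\<^sub>1\<close>. Hence for g normalizing A, \<open>g\<inverse> \<tau>\<^sup>2 g\<close> is a translation and commutes
  with \<open>\<tau>\<close>, i.e. \<open>g \<tau> g\<inverse> \<in> A\<close> commutes with \<open>\<tau>\<^sup>2\<close>. In A only translations commute with
  \<open>\<tau>\<^sup>2\<close>, because \<open>2a = 2\<close> forces \<open>a = 1\<close> in \<open>\<int>\<^sub>2\<close>. Applying this to g and to \<open>g\<inverse>\<close>, g satisfies the
  criterion above.
\<close>

section \<open>Words as binary residues\<close>

fun enc :: "bool list \<Rightarrow> int" where
  "enc [] = 0"
| "enc (b # w) = of_bool b + 2 * enc w"

fun dec :: "nat \<Rightarrow> int \<Rightarrow> bool list" where
  "dec 0 v = []"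
| "dec (Suc n) v = (v mod 2 = 1) # dec n (v div 2)"

lemma mod_pow2_Suc: "(v::int) mod 2 ^ Suc n = v mod 2 + 2 * (v div 2 mod 2 ^ n)"
  using mod_mult2_eq'[of v 2 "2 ^ n"] by (simp add: algebra_simps)

lemma mod_pow2_Suc_digit:
  assumes "0 \<le> r" "r < 2"
  shows "((r::int) + 2 * v) mod 2 ^ Suc n = r + 2 * (v mod 2 ^ n)"
  using assms mod_pow2_Suc[of "r + 2 * v" n] by simp

lemma double_mod_pow2_Suc: "2 * ((v::int) mod 2 ^ n) = 2 * v mod 2 ^ Suc n"
  using mod_pow2_Suc_digit[of 0 v n] by simp

lemma mod_mult_add_arg: "((a::int) * (v mod m) + b) mod m = (a * v + b) mod m"
  by (metis mod_add_left_eq mod_mult_right_eq)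

lemma mod_mult_add_cong:
  "a mod m = a' mod m \<Longrightarrow> b mod m = b' mod m \<Longrightarrow> ((a::int) * v + b) mod m = (a' * v + b') mod m"
  by (rule mod_add_cong[OF mod_mult_cong[OF _ refl]])

lemma enc_bounds: "0 \<le> enc w \<and> enc w < 2 ^ length w"
  by (induction w) auto

lemma length_dec [simp]: "length (dec n v) = n"
  by (induction n arbitrary: v) auto

lemma enc_dec [simp]: "enc (dec n v) = v mod 2 ^ n"
proof (induction n arbitrary: v)
  case (Suc n)
  have "v mod 2 = 0 \<or> v mod 2 = 1" by auto
  then show ?case using Suc mod_pow2_Suc[of v n] by auto
qed simp

lemma dec_enc [simp]: "dec (length w) (enc w) = w"
  by (induction w) auto

lemma word_eqI: "length u = length w \<Longrightarrow> enc u = enc w \<Longrightarrow> u = w"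
  by (metis dec_enc)

lemma dec_eq_iff: "dec n u = dec n v \<longleftrightarrow> u mod 2 ^ n = v mod 2 ^ n"
  by (metis dec_enc enc_dec length_dec)

lemma take_dec: "m \<le> n \<Longrightarrow> take m (dec n v) = dec m v"
proof (induction m arbitrary: n v)
  case (Suc m)
  then obtain k where "n = Suc k" "m \<le> k" by (cases n) auto
  then show ?case using Suc by simp
qed simp

lemma enc_take: "enc (take m w) = enc w mod 2 ^ m"
proof (induction w arbitrary: m)
  case (Cons b w)
  then show ?case
    by (cases m) (use mod_pow2_Suc_digit[of "of_bool b" "enc w"] in auto)
qed simp

section \<open>2-adic integers\<close>

lemma Z2_bounds: "x \<in> Z2 \<Longrightarrow> 0 \<le> x n \<and> x n < 2 ^ n"
  unfolding Z2_def by blast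

lemma Z2_coherent: "x \<in> Z2 \<Longrightarrow> x (Suc n) mod 2 ^ n = x n"
  unfolding Z2_def mem_Collect_eq by metis

lemma Z2_mod:
  assumes "x \<in> Z2" "n \<le> N"
  shows "x N mod 2 ^ n = x n"
  using assms(2)
proof (induction N rule: dec_induct)
  case base
  show ?case using Z2_bounds[OF assms(1)] by simp
next
  case (step N)
  have "x (Suc N) mod 2 ^ n = x (Suc N) mod 2 ^ N mod 2 ^ n"
    using step(1) by (simp add: mod_mod_cancel le_imp_power_dvd)
  also have "x (Suc N) mod 2 ^ N = x N"
    using assms(1) by (rule Z2_coherent)
  finally show ?case using step by simp
qed

lemma Z2_parity: "x \<in> Z2 \<Longrightarrow> x (Suc n) mod 2 = x 1"
  using Z2_mod[of x 1 "Suc n"] by simp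

lemma Z2_normalizeI:
  assumes "\<And>n. f (Suc n) mod 2 ^ n = f n mod 2 ^ n"
  shows "(\<lambda>n. f n mod 2 ^ n) \<in> Z2"
  unfolding Z2_def using assms by (auto simp: mod_mod_cancel)

lemma z2_of_int_Z2 [simp]: "z2_of_int k \<in> Z2"
  unfolding z2_of_int_def by (rule Z2_normalizeI) (simp add: mod_mod_cancel)

lemma z2_add_Z2 [simp]: "x \<in> Z2 \<Longrightarrow> y \<in> Z2 \<Longrightarrow> z2_add x y \<in> Z2"
  unfolding z2_add_def by (rule Z2_normalizeI) (metis Z2_mod le_SucI order_refl mod_add_eq)

lemma z2_mult_Z2 [simp]: "x \<in> Z2 \<Longrightarrow> y \<in> Z2 \<Longrightarrow> z2_mult x y \<in> Z2"
  unfolding z2_mult_def by (rule Z2_normalizeI) (metis Z2_mod le_SucI order_refl mod_mult_eq)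

lemma z2_add_of_int: "z2_add x (z2_of_int k) n = (x n + k) mod 2 ^ n"
  unfolding z2_add_def z2_of_int_def by (simp add: mod_add_right_eq)

lemma z2_add_self_Suc: "y \<in> Z2 \<Longrightarrow> z2_add y y (Suc n) = 2 * y n"
  using double_mod_pow2_Suc[of "y (Suc n)" n] Z2_coherent[of y n]
  by (simp add: z2_add_def flip: mult_2)

lemma z2_half:
  assumes x: "x \<in> Z2" and even: "x 1 = 0"
  shows "z2_half x \<in> Z2" and "z2_add (z2_half x) (z2_half x) = x"
    and "2 * z2_half x n = x (Suc n)"
proof -
  define h where "h n = x (Suc n) div 2" for n
  have double: "2 * h n = x (Suc n)" for n
  proof -
    have "x (Suc n) mod 2 = 0" using Z2_parity[OF x] even by simp
    then show ?thesis unfolding h_def by (metis mult_div_mod_eq add_0_right)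
  qed
  have hZ2: "h \<in> Z2"
    unfolding Z2_def
  proof (intro CollectI allI conjI)
    fix n
    show "0 \<le> h n" "h n < 2 ^ n"
      using double[of n] Z2_bounds[OF x, of "Suc n"] by simp_all
    have "2 * h (Suc n) mod 2 ^ Suc n = x (Suc n)"
      using double[of "Suc n"] Z2_coherent[OF x, of "Suc n"] by simp
    then show "h n = h (Suc n) mod 2 ^ n"
      using mod_pow2_Suc_digit[of 0 "h (Suc n)" n] double[of n] by simp
  qed
  have hh: "z2_add h h = x"
  proof
    fix n
    show "z2_add h h n = x n"
      using double[of n] Z2_coherent[OF x, of n] by (simp add: z2_add_def flip: mult_2)
  qed
  moreover have "y = h" if "y \<in> Z2" "z2_add y y = x" for y
  proof
    fix n
    show "y n = h n"
      using z2_add_self_Suc[OF that(1), of n] double[of n] that(2) by simp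
  qed
  ultimately have "z2_half x = h"
    unfolding z2_half_def using hZ2 by blast
  then show "z2_half x \<in> Z2" "z2_add (z2_half x) (z2_half x) = x" "2 * z2_half x n = x (Suc n)"
    using hZ2 hh double by simp_all
qed

lemma z2_even_iff: "x \<in> Z2 \<Longrightarrow> z2_even x \<longleftrightarrow> x 1 = 0"
proof
  assume "z2_even x"
  then obtain y where "z2_add y y = x" unfolding z2_even_def by blast
  then show "x 1 = 0" by (auto simp: z2_add_def simp flip: mult_2)
next
  assume "x \<in> Z2" "x 1 = 0"
  then show "z2_even x"
    unfolding z2_even_def using z2_half(1,2) by blast
qed

lemma Z2_unit_inverse:
  assumes "x \<in> Z2_units"
  obtains y where "y \<in> Z2" "\<And>n. x n * y n mod 2 ^ n = 1 mod 2 ^ n"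
proof -
  obtain y where "y \<in> Z2" "z2_mult x y = z2_of_int 1"
    using assms unfolding Z2_units_def by blast
  then show thesis
    using that[of y] unfolding z2_mult_def z2_of_int_def by metis
qed

lemma Z2_unitsI:
  "x \<in> Z2 \<Longrightarrow> y \<in> Z2 \<Longrightarrow> (\<And>n. x n * y n mod 2 ^ n = 1 mod 2 ^ n) \<Longrightarrow> x \<in> Z2_units"
  unfolding Z2_units_def z2_mult_def z2_of_int_def by auto

lemma Z2_units_Z2: "x \<in> Z2_units \<Longrightarrow> x \<in> Z2"
  unfolding Z2_units_def by blast

lemma Z2_unit_odd: "x \<in> Z2_units \<Longrightarrow> x 1 = 1"
proof -
  assume u: "x \<in> Z2_units"
  obtain y where "\<And>n. x n * y n mod 2 ^ n = 1 mod 2 ^ n"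
    using Z2_unit_inverse[OF u] by blast
  then have "x 1 * y 1 mod 2 = 1"
    by (metis power_one_right one_mod_two_eq_one)
  then have "x 1 mod 2 = 1"
    by (metis mod_mult_left_eq mult_zero_left not_mod_2_eq_1_eq_0 zero_neq_one mod_0)
  moreover have "x 1 = 0 \<or> x 1 = 1"
    using Z2_bounds[OF Z2_units_Z2[OF u], of 1] by auto
  ultimately show ?thesis by auto
qed

section \<open>Affine maps of the tree\<close>

definition aff :: "(nat \<Rightarrow> int) \<Rightarrow> (nat \<Rightarrow> int) \<Rightarrow> bool list \<Rightarrow> bool list" where
  "aff a b w = dec (length w) (a (length w) * enc w + b (length w))"

lemma length_aff [simp]: "length (aff a b w) = length w"
  by (simp add: aff_def)

lemma enc_aff: "enc (aff a b w) = (a (length w) * enc w + b (length w)) mod 2 ^ length w"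
  by (simp add: aff_def)

lemma aff_eqI:
  assumes "\<And>w. length (f w) = length w"
    and "\<And>w. enc (f w) = (a (length w) * enc w + b (length w)) mod 2 ^ length w"
  shows "f = aff a b"
proof
  fix w
  show "f w = aff a b w"
    by (rule word_eqI) (simp_all add: assms enc_aff)
qed

lemma aff_comp: "aff a b \<circ> aff c d = aff (\<lambda>n. a n * c n) (\<lambda>n. a n * d n + b n)"
proof (rule aff_eqI)
  fix w :: "bool list"
  let ?n = "length w"
  have "enc ((aff a b \<circ> aff c d) w) = (a ?n * ((c ?n * enc w + d ?n) mod 2 ^ ?n) + b ?n) mod 2 ^ ?n"
    by (simp add: enc_aff)
  also have "\<dots> = (a ?n * c ?n * enc w + (a ?n * d ?n + b ?n)) mod 2 ^ ?n"
    unfolding mod_mult_add_arg by (simp add: algebra_simps)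
  finally show "enc ((aff a b \<circ> aff c d) w) = (a ?n * c ?n * enc w + (a ?n * d ?n + b ?n)) mod 2 ^ ?n" .
qed simp

lemma aff_eq_iff:
  "aff a b = aff a' b' \<longleftrightarrow> (\<forall>n. a n mod 2 ^ n = a' n mod 2 ^ n \<and> b n mod 2 ^ n = b' n mod 2 ^ n)"
proof
  assume eq: "aff a b = aff a' b'"
  show "\<forall>n. a n mod 2 ^ n = a' n mod 2 ^ n \<and> b n mod 2 ^ n = b' n mod 2 ^ n"
  proof
    fix n
    have "enc (aff a b (dec n v)) = enc (aff a' b' (dec n v))" for v
      using eq by simp
    then have on_dec: "(a n * v + b n) mod 2 ^ n = (a' n * v + b' n) mod 2 ^ n" for v
      by (simp add: enc_aff mod_mult_add_arg)
    from on_dec[of 0] have b: "b n mod 2 ^ n = b' n mod 2 ^ n" by simp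
    from on_dec[of 1] have "(a n + b n) mod 2 ^ n = (a' n + b' n) mod 2 ^ n"
      by simp
    then have "(a n + b n - b n) mod 2 ^ n = (a' n + b' n - b' n) mod 2 ^ n"
      using b by (metis mod_diff_cong)
    with b show "a n mod 2 ^ n = a' n mod 2 ^ n \<and> b n mod 2 ^ n = b' n mod 2 ^ n" by simp
  qed
next
  assume "\<forall>n. a n mod 2 ^ n = a' n mod 2 ^ n \<and> b n mod 2 ^ n = b' n mod 2 ^ n"
  then have "(a n * e + b n) mod 2 ^ n = (a' n * e + b' n) mod 2 ^ n" for n e
    by (blast intro: mod_mult_add_cong)
  then show "aff a b = aff a' b'"
    by (simp add: aff_def fun_eq_iff dec_eq_iff)
qed

lemma aff_id: "aff (\<lambda>_. 1) (\<lambda>_. 0) = id"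
  by (rule aff_eqI[symmetric]) (simp_all add: enc_bounds)

lemma aff_inverse:
  assumes "\<And>n. a n * a' n mod 2 ^ n = 1 mod 2 ^ n"
  shows "aff a' (\<lambda>n. - (a' n * b n)) \<circ> aff a b = id"
    and "aff a b \<circ> aff a' (\<lambda>n. - (a' n * b n)) = id"
proof -
  have "2 ^ n dvd a n * a' n - 1" for n
    using mod_eq_dvd_iff[THEN iffD1, OF assms[of n]] .
  moreover have "b n - a n * (a' n * b n) = - (b n * (a n * a' n - 1))" for n
    by (simp add: algebra_simps)
  ultimately have "2 ^ n dvd b n - a n * (a' n * b n)" for n
    by simp
  then show "aff a b \<circ> aff a' (\<lambda>n. - (a' n * b n)) = id"
    unfolding aff_comp aff_id[symmetric] aff_eq_iff using assms
    by (simp add: mod_eq_dvd_iff)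
  show "aff a' (\<lambda>n. - (a' n * b n)) \<circ> aff a b = id"
    unfolding aff_comp aff_id[symmetric] aff_eq_iff using assms
    by (simp add: mult.commute)
qed

lemma aff_take:
  assumes "a \<in> Z2" "b \<in> Z2"
  shows "aff a b (take m w) = take m (aff a b w)"
proof (cases "m \<le> length w")
  case True
  let ?n = "length w"
  have "(a ?n * enc w + b ?n) mod 2 ^ m = (a m * enc w + b m) mod 2 ^ m"
    by (rule mod_mult_add_cong) (simp_all add: Z2_mod assms True)
  also have "\<dots> = (a m * (enc w mod 2 ^ m) + b m) mod 2 ^ m"
    by (simp add: mod_mult_add_arg)
  finally show ?thesis
    using True by (simp add: aff_def take_dec enc_take min_absorb2 dec_eq_iff)
qed simp

lemma (in group) inv_mult_cancel_left [simp]: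
  "x \<in> carrier G \<Longrightarrow> y \<in> carrier G \<Longrightarrow> inv x \<otimes> (x \<otimes> y) = y"
  by (simp flip: m_assoc)

lemma (in group) mult_inv_cancel_left [simp]:
  "x \<in> carrier G \<Longrightarrow> y \<in> carrier G \<Longrightarrow> x \<otimes> (inv x \<otimes> y) = y"
  by (simp flip: m_assoc)

lemma (in group) conj_commutator:
  assumes "g \<in> carrier G" "x \<in> carrier G" "y \<in> carrier G"
  shows "g \<otimes> (x \<otimes> y \<otimes> inv x \<otimes> inv y) \<otimes> inv g =
    (g \<otimes> x \<otimes> inv g) \<otimes> (g \<otimes> y \<otimes> inv g) \<otimes> inv (g \<otimes> x \<otimes> inv g) \<otimes> inv (g \<otimes> y \<otimes> inv g)"
  using assms by (simp add: m_assoc inv_mult_group)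

lemma (in group) conj_commute:
  assumes "g \<in> carrier G" "x \<in> carrier G" "y \<in> carrier G"
    and "x \<otimes> (inv g \<otimes> y \<otimes> g) = (inv g \<otimes> y \<otimes> g) \<otimes> x"
  shows "(g \<otimes> x \<otimes> inv g) \<otimes> y = y \<otimes> (g \<otimes> x \<otimes> inv g)"
proof -
  have "g \<otimes> (x \<otimes> (inv g \<otimes> y \<otimes> g)) \<otimes> inv g = g \<otimes> ((inv g \<otimes> y \<otimes> g) \<otimes> x) \<otimes> inv g"
    using assms(4) by simp
  then show ?thesis
    using assms(1-3) by (simp add: m_assoc)
qed

lemma (in group) normalizer_conj_closed:
  assumes "H \<subseteq> carrier G" "g \<in> normalizer G H" "h \<in> H"
  shows "g \<otimes> h \<otimes> inv g \<in> H"
proof -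
  have "g <# H #> inv g = H"
    using assms(1,2) unfolding normalizer_def stabilizer_def by auto
  moreover have "g \<otimes> h \<otimes> inv g \<in> g <# H #> inv g"
    unfolding l_coset_def r_coset_def using assms(3) by auto
  ultimately show ?thesis by simp
qed

lemma (in group) normalizerI:
  assumes H: "H \<subseteq> carrier G" and g: "g \<in> carrier G"
    and "\<And>h. h \<in> H \<Longrightarrow> g \<otimes> h \<otimes> inv g \<in> H" "\<And>h. h \<in> H \<Longrightarrow> inv g \<otimes> h \<otimes> g \<in> H"
  shows "g \<in> normalizer G H"
proof -
  have "g <# H #> inv g \<subseteq> H"
    using assms(3) unfolding l_coset_def r_coset_def by auto
  moreover have "H \<subseteq> g <# H #> inv g"
  proof
    fix h
    assume h: "h \<in> H"
    then have "h = g \<otimes> (inv g \<otimes> h \<otimes> g) \<otimes> inv g"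
      using H g by (auto simp: m_assoc)
    then show "h \<in> g <# H #> inv g"
      using assms(4)[OF h] unfolding l_coset_def r_coset_def by auto
  qed
  ultimately show ?thesis
    using H g unfolding normalizer_def stabilizer_def by auto
qed

lemma (in group) subgroup_subset_normalizer:
  assumes "subgroup H G"
  shows "H \<subseteq> normalizer G H"
proof
  fix g
  assume "g \<in> H"
  with assms show "g \<in> normalizer G H"
    by (intro normalizerI) (auto simp: subgroup.subset subgroup.mem_carrier subgroup.m_closed subgroup.m_inv_closed)
qed

lemma W_carrier_iff:
  "g \<in> carrier W \<longleftrightarrow> bij g \<and> (\<forall>w n. g (take n w) = take n (g w)) \<and> (\<forall>w. length (g w) = length w)"
  by (simp add: W_def tree_isometries_def)

lemma W_mult: "g \<otimes>\<^bsub>W\<^esub> h = h \<circ> g"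
  by (simp add: W_def)

lemma W_one: "\<one>\<^bsub>W\<^esub> = id"
  by (simp add: W_def)

lemma inv_into_W: "g \<in> carrier W \<Longrightarrow> inv_into UNIV g \<in> carrier W"
proof -
  assume g: "g \<in> carrier W"
  then have "bij g" and take_g: "\<And>w n. g (take n w) = take n (g w)"
    and length_g: "\<And>w. length (g w) = length w"
    by (auto simp: W_carrier_iff)
  let ?h = "inv_into UNIV g"
  have g_h: "g (?h w) = w" for w using \<open>bij g\<close> by (simp add: bij_is_surj surj_f_inv_f)
  have h_g: "?h (g w) = w" for w using \<open>bij g\<close> by (simp add: bij_is_inj)
  have "?h (take n w) = take n (?h w)" for w n
    using take_g[of n "?h w"] by (metis g_h h_g)
  moreover have "length (?h w) = length w" for w
    by (metis g_h length_g)
  ultimately show ?thesis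
    using \<open>bij g\<close> by (simp add: W_carrier_iff bij_imp_bij_inv)
qed

lemma group_W: "group W"
proof (rule groupI)
  fix x y
  assume "x \<in> carrier W" "y \<in> carrier W"
  then show "x \<otimes>\<^bsub>W\<^esub> y \<in> carrier W"
    by (auto simp: W_mult W_carrier_iff bij_comp)
next
  fix x
  assume x: "x \<in> carrier W"
  then have "x \<circ> inv_into UNIV x = id"
    using surj_iff bij_is_surj by (auto simp: W_carrier_iff)
  then show "\<exists>y\<in>carrier W. y \<otimes>\<^bsub>W\<^esub> x = \<one>\<^bsub>W\<^esub>"
    using inv_into_W[OF x] by (auto simp: W_mult W_one)
qed (auto simp: W_mult W_one W_carrier_iff comp_assoc)

lemma W_inv:
  assumes g: "g \<in> carrier W"
  shows "inv\<^bsub>W\<^esub> g = inv_into UNIV g"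
proof -
  have "g \<circ> inv_into UNIV g = id"
    using g surj_iff bij_is_surj by (auto simp: W_carrier_iff)
  then show ?thesis
    using group.inv_equality[OF group_W _ g inv_into_W[OF g]] by (simp add: W_mult W_one)
qed

lemma W_orbit_Z2: "g \<in> carrier W \<Longrightarrow> (\<lambda>n. enc (g (dec n v))) \<in> Z2"
  unfolding Z2_def
proof (intro CollectI allI conjI)
  fix n
  assume g: "g \<in> carrier W"
  show "0 \<le> enc (g (dec n v))" "enc (g (dec n v)) < 2 ^ n"
    using enc_bounds[of "g (dec n v)"] g by (simp_all add: W_carrier_iff)
  have "take n (dec (Suc n) v) = dec n v"
    by (rule take_dec) simp
  then show "enc (g (dec n v)) = enc (g (dec (Suc n) v)) mod 2 ^ n"
    using g by (metis W_carrier_iff enc_take)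
qed

lemma aff_in_W:
  assumes "a \<in> Z2" "b \<in> Z2" "\<And>n. a n * a' n mod 2 ^ n = 1 mod 2 ^ n"
  shows "aff a b \<in> carrier W"
  using aff_inverse[OF assms(3)] aff_take[OF assms(1,2)]
  by (auto simp: W_carrier_iff intro: o_bij)

lemma inv_W_aff:
  assumes "aff a b \<in> carrier W" "\<And>n. a n * a' n mod 2 ^ n = 1 mod 2 ^ n"
  shows "inv\<^bsub>W\<^esub> (aff a b) = aff a' (\<lambda>n. - (a' n * b n))"
  using W_inv[OF assms(1)] inv_unique_comp[OF aff_inverse(2,1)[OF assms(2)]] by simp

lemma W_aff_Z2_offset:
  assumes "aff a b \<in> carrier W"
  obtains b' where "b' \<in> Z2" "aff a b = aff a b'"
proof
  let ?b' = "\<lambda>n. enc (aff a b (dec n 0))"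
  show "?b' \<in> Z2" using W_orbit_Z2[OF assms] .
  show "aff a b = aff a ?b'"
    by (simp add: aff_eq_iff enc_aff)
qed

section \<open>T and A as groups of affine maps\<close>

text \<open>One step of the recursion for \<open>\<tau>\<^sup>x\<close> is one digit of the binary addition of x; the
  carry is absorbed into the exponent y used on the subtree.\<close>

lemma tau_pow_Cons:
  assumes x: "x \<in> Z2"
  obtains b' y where "y \<in> Z2" "tau_pow x (b # w) = b' # tau_pow y w"
    and "(of_bool b' + 2 * y n) mod 2 ^ Suc n = (of_bool b + x (Suc n)) mod 2 ^ Suc n"
proof (cases "x 1 = 0")
  case True
  then show ?thesis
    using that[of "z2_half x" b] z2_half(1,3)[OF x True] z2_even_iff[OF x] by simp
next
  case False
  then have odd: "x 1 = 1" using Z2_bounds[OF x, of 1] by auto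
  then have not_even: "\<not> z2_even x" using z2_even_iff[OF x] by simp
  show ?thesis
  proof (cases b)
    case True
    let ?z = "z2_add x (z2_of_int 1)"
    have z: "?z \<in> Z2" "?z 1 = 0" using x odd by (simp_all add: z2_add_of_int)
    show ?thesis
      using that[of "z2_half ?z" False] z2_half(1,3)[OF z] not_even True
      by (simp add: z2_add_of_int add.commute)
  next
    case False
    let ?z = "z2_add x (z2_of_int (-1))"
    have z: "?z \<in> Z2" "?z 1 = 0" using x odd by (simp_all add: z2_add_of_int)
    show ?thesis
      using that[of "z2_half ?z" True] z2_half(1,3)[OF z] not_even False
      by (simp add: z2_add_of_int mod_add_right_eq)
  qed
qed

lemma tau_pow_enc:
  "x \<in> Z2 \<Longrightarrow> length (tau_pow x w) = length w \<and>
     enc (tau_pow x w) = (enc w + x (length w)) mod 2 ^ length w"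
proof (induction w arbitrary: x)
  case (Cons b w)
  let ?n = "length w"
  obtain b' y where y: "y \<in> Z2" and eq: "tau_pow x (b # w) = b' # tau_pow y w"
    and digit: "(of_bool b' + 2 * y ?n) mod 2 ^ Suc ?n = (of_bool b + x (Suc ?n)) mod 2 ^ Suc ?n"
    using tau_pow_Cons[OF Cons.prems] .
  have "enc (tau_pow x (b # w)) = of_bool b' + 2 * ((enc w + y ?n) mod 2 ^ ?n)"
    using Cons.IH[OF y] eq by simp
  also have "\<dots> = (2 * enc w + (of_bool b' + 2 * y ?n)) mod 2 ^ Suc ?n"
    using mod_pow2_Suc_digit[of "of_bool b'" "enc w + y ?n" ?n] by (simp add: algebra_simps)
  also have "\<dots> = (2 * enc w + (of_bool b + x (Suc ?n))) mod 2 ^ Suc ?n"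
    using digit by (metis mod_add_right_eq)
  finally show ?case using Cons.IH[OF y] eq by (simp add: algebra_simps)
qed simp

lemma tau_pow_eq_aff: "x \<in> Z2 \<Longrightarrow> tau_pow x = aff (\<lambda>_. 1) x"
  by (rule aff_eqI) (simp_all add: tau_pow_enc)

lemma u_elt_Cons_True:
  assumes u: "x \<in> Z2_units"
  obtains y where "y \<in> Z2" "\<And>w. u_elt x (True # w) = True # tau_pow y (u_elt x w)"
    and "\<And>n. (1 + 2 * y n) mod 2 ^ Suc n = x (Suc n) mod 2 ^ Suc n"
proof -
  let ?z = "z2_add x (z2_of_int (-1))"
  have "?z \<in> Z2" "?z 1 = 0"
    using Z2_units_Z2[OF u] Z2_unit_odd[OF u] by (simp_all add: z2_add_of_int)
  then show thesis
    using that[of "z2_half ?z"] z2_half(1,3) by (simp add: z2_add_of_int mod_add_right_eq)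
qed

lemma u_elt_eq_aff:
  assumes u: "x \<in> Z2_units"
  shows "u_elt x = aff x (\<lambda>_. 0)"
proof -
  have x: "x \<in> Z2" using Z2_units_Z2[OF u] .
  obtain y where y: "y \<in> Z2" and u_True: "\<And>w. u_elt x (True # w) = True # tau_pow y (u_elt x w)"
    and digit: "\<And>n. (1 + 2 * y n) mod 2 ^ Suc n = x (Suc n) mod 2 ^ Suc n"
    using u_elt_Cons_True[OF u] by blast
  have "length (u_elt x w) = length w \<and> enc (u_elt x w) = x (length w) * enc w mod 2 ^ length w" for w
  proof (induction w)
    case (Cons b w)
    let ?n = "length w" and ?e = "enc w" and ?e' = "enc (u_elt x w)"
    have IH: "length (u_elt x w) = ?n" "?e' = x ?n * ?e mod 2 ^ ?n"
      using Cons.IH by auto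
    have "2 * ?e' = 2 * (x (Suc ?n) * ?e) mod 2 ^ Suc ?n"
      using IH(2) Z2_coherent[OF x, of ?n]
      by (metis double_mod_pow2_Suc mod_mult_left_eq)
    then have even_part: "2 * ?e' mod 2 ^ Suc ?n = x (Suc ?n) * (2 * ?e) mod 2 ^ Suc ?n"
      by (simp add: algebra_simps)
    show ?case
    proof (cases b)
      case True
      have "enc (u_elt x (b # w)) = 1 + 2 * ((?e' + y ?n) mod 2 ^ ?n)"
        using True IH u_True tau_pow_enc[OF y] by simp
      also have "\<dots> = ((1 + 2 * y ?n) + 2 * ?e') mod 2 ^ Suc ?n"
        using mod_pow2_Suc_digit[of 1 "?e' + y ?n" ?n] by (simp add: algebra_simps)
      also have "\<dots> = (x (Suc ?n) + x (Suc ?n) * (2 * ?e)) mod 2 ^ Suc ?n"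
        using digit even_part by (rule mod_add_cong)
      finally show ?thesis using True IH u_True tau_pow_enc[OF y] by (simp add: algebra_simps)
    next
      case False
      then show ?thesis using IH even_part by simp
    qed
  qed simp
  then show ?thesis
    by (intro aff_eqI) simp_all
qed

definition tau :: "bool list \<Rightarrow> bool list" where
  "tau = tau_pow (z2_of_int 1)"

lemma tau_eq_aff: "tau = aff (\<lambda>_. 1) (\<lambda>_. 1)"
  unfolding tau_def tau_pow_eq_aff[OF z2_of_int_Z2] by (simp add: aff_eq_iff z2_of_int_def)

lemma T_iff: "f \<in> T \<longleftrightarrow> (\<exists>x\<in>Z2. f = aff (\<lambda>_. 1) x)"
  unfolding T_def using tau_pow_eq_aff by auto

lemma tau_in_T: "tau \<in> T"
  unfolding T_def tau_def by simp

lemma z2_of_int_unit: "k * k = 1 \<Longrightarrow> z2_of_int k \<in> Z2_units"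
  by (rule Z2_unitsI[OF z2_of_int_Z2[of k] z2_of_int_Z2[of k]]) (simp add: z2_of_int_def mod_simps)

lemma A_iff: "f \<in> A \<longleftrightarrow> (\<exists>a\<in>Z2_units. \<exists>b\<in>Z2. f = aff a b)"
proof
  assume "f \<in> A"
  then obtain t a where t: "t \<in> T" and a: "a \<in> Z2_units" and f: "f = u_elt a \<circ> t"
    unfolding A_def set_mult_def U_def by (auto simp: W_mult)
  obtain d where d: "d \<in> Z2" "t = aff (\<lambda>_. 1) d" using t T_iff by blast
  have "f = aff a (z2_mult a d)"
    unfolding f d(2) u_elt_eq_aff[OF a] aff_comp aff_eq_iff
    by (simp add: z2_mult_def)
  then show "\<exists>a\<in>Z2_units. \<exists>b\<in>Z2. f = aff a b"
    using a d(1) by (blast intro: z2_mult_Z2 Z2_units_Z2)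
next
  assume "\<exists>a\<in>Z2_units. \<exists>b\<in>Z2. f = aff a b"
  then obtain a b where a: "a \<in> Z2_units" and b: "b \<in> Z2" and f: "f = aff a b" by blast
  obtain a' where a': "a' \<in> Z2" "\<And>n. a n * a' n mod 2 ^ n = 1 mod 2 ^ n"
    using Z2_unit_inverse[OF a] by blast
  let ?d = "z2_mult a' b"
  have "(a n * (a' n * b n)) mod 2 ^ n = b n mod 2 ^ n" for n
    using mod_mult_cong[OF a'(2)[of n] refl, of "b n"] by (simp add: algebra_simps)
  then have "f = u_elt a \<circ> tau_pow ?d"
    unfolding f u_elt_eq_aff[OF a] tau_pow_eq_aff[OF z2_mult_Z2[OF a'(1) b]] aff_comp aff_eq_iff
    by (simp add: z2_mult_def mod_mult_right_eq)
  moreover have "tau_pow ?d \<in> T" "u_elt a \<in> U"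
    unfolding T_def U_def using a a'(1) b by simp_all
  ultimately show "f \<in> A"
    unfolding A_def set_mult_def by (auto simp: W_mult)
qed

lemma T_subset_A: "T \<subseteq> A"
proof
  fix f
  assume "f \<in> T"
  then obtain x where "x \<in> Z2" "f = aff (\<lambda>_. 1) x" using T_iff by blast
  moreover have "aff (\<lambda>_. 1) x = aff (z2_of_int 1) x"
    by (simp add: aff_eq_iff z2_of_int_def)
  ultimately show "f \<in> A"
    using A_iff z2_of_int_unit[of 1] by auto
qed

lemma A_subset_W: "A \<subseteq> carrier W"
  using A_iff aff_in_W Z2_units_Z2 Z2_unit_inverse by (metis subsetI)

definition has_slope :: "(nat \<Rightarrow> int) \<Rightarrow> (bool list \<Rightarrow> bool list) \<Rightarrow> bool" where
  "has_slope a f \<longleftrightarrow> (\<exists>b. f = aff a b)"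

lemma has_slope_aff: "has_slope a (aff a b)"
  unfolding has_slope_def by blast

lemma has_slope_comp:
  "has_slope a f \<Longrightarrow> has_slope c g \<Longrightarrow> has_slope (\<lambda>n. a n * c n) (f \<circ> g)"
  unfolding has_slope_def by (auto simp: aff_comp)

lemma has_slope_one_in_T:
  assumes "f \<in> carrier W" "has_slope a f" "\<And>n. a n mod 2 ^ n = 1 mod 2 ^ n"
  shows "f \<in> T"
proof -
  obtain b where f: "f = aff a b" using assms(2) unfolding has_slope_def by blast
  obtain b' where "b' \<in> Z2" "f = aff a b'" using W_aff_Z2_offset assms(1) f by metis
  moreover have "aff a b' = aff (\<lambda>_. 1) b'" using assms(3) by (simp add: aff_eq_iff)
  ultimately show ?thesis using T_iff by auto
qed

lemma A_slopes:
  assumes "g \<in> A"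
  obtains a a' where "has_slope a g" "has_slope a' (inv\<^bsub>W\<^esub> g)"
    "\<And>n. a n * a' n mod 2 ^ n = 1 mod 2 ^ n"
proof -
  obtain a b where a: "a \<in> Z2_units" and g: "g = aff a b"
    using assms A_iff by blast
  obtain a' where inverse: "\<And>n. a n * a' n mod 2 ^ n = 1 mod 2 ^ n"
    using Z2_unit_inverse[OF a] by blast
  have "aff a b \<in> carrier W" using assms A_subset_W g by blast
  then have "inv\<^bsub>W\<^esub> g = aff a' (\<lambda>n. - (a' n * b n))"
    unfolding g by (rule inv_W_aff[OF _ inverse])
  then have "has_slope a' (inv\<^bsub>W\<^esub> g)"
    unfolding has_slope_def by blast
  moreover have "has_slope a g"
    unfolding g by (rule has_slope_aff)
  ultimately show thesis using that inverse by blast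
qed

lemma T_slope: "t \<in> T \<Longrightarrow> has_slope (\<lambda>_. 1) t"
  by (auto simp: T_iff has_slope_aff)

lemma A_conj_T:
  assumes g: "g \<in> A" and t: "t \<in> T"
  shows "g \<otimes>\<^bsub>W\<^esub> t \<otimes>\<^bsub>W\<^esub> inv\<^bsub>W\<^esub> g \<in> T" and "inv\<^bsub>W\<^esub> g \<otimes>\<^bsub>W\<^esub> t \<otimes>\<^bsub>W\<^esub> g \<in> T"
proof -
  interpret W: group W by (rule group_W)
  obtain a a' where a: "has_slope a g" "has_slope a' (inv\<^bsub>W\<^esub> g)"
    and inverse: "\<And>n. a n * a' n mod 2 ^ n = 1 mod 2 ^ n"
    using A_slopes[OF g] by blast
  have W: "g \<in> carrier W" "t \<in> carrier W"
    using g t T_subset_A A_subset_W by auto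
  show "g \<otimes>\<^bsub>W\<^esub> t \<otimes>\<^bsub>W\<^esub> inv\<^bsub>W\<^esub> g \<in> T"
  proof (rule has_slope_one_in_T)
    show "has_slope (\<lambda>n. a' n * (1 * a n)) (g \<otimes>\<^bsub>W\<^esub> t \<otimes>\<^bsub>W\<^esub> inv\<^bsub>W\<^esub> g)"
      unfolding W_mult by (rule has_slope_comp[OF a(2) has_slope_comp[OF T_slope[OF t] a(1)]])
  qed (use W inverse in \<open>simp_all add: mult.commute\<close>)
  show "inv\<^bsub>W\<^esub> g \<otimes>\<^bsub>W\<^esub> t \<otimes>\<^bsub>W\<^esub> g \<in> T"
  proof (rule has_slope_one_in_T)
    show "has_slope (\<lambda>n. a n * (1 * a' n)) (inv\<^bsub>W\<^esub> g \<otimes>\<^bsub>W\<^esub> t \<otimes>\<^bsub>W\<^esub> g)"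
      unfolding W_mult by (rule has_slope_comp[OF a(1) has_slope_comp[OF T_slope[OF t] a(2)]])
  qed (use W inverse in simp_all)
qed

lemma commutator_in_T:
  assumes p: "p \<in> A" and q: "q \<in> A"
  shows "p \<otimes>\<^bsub>W\<^esub> q \<otimes>\<^bsub>W\<^esub> inv\<^bsub>W\<^esub> p \<otimes>\<^bsub>W\<^esub> inv\<^bsub>W\<^esub> q \<in> T"
proof -
  interpret W: group W by (rule group_W)
  obtain a a' where a: "has_slope a p" "has_slope a' (inv\<^bsub>W\<^esub> p)"
    and a_inverse: "\<And>n. a n * a' n mod 2 ^ n = 1 mod 2 ^ n"
    using A_slopes[OF p] by blast
  obtain c c' where c: "has_slope c q" "has_slope c' (inv\<^bsub>W\<^esub> q)"
    and c_inverse: "\<And>n. c n * c' n mod 2 ^ n = 1 mod 2 ^ n"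
    using A_slopes[OF q] by blast
  have W: "p \<in> carrier W" "q \<in> carrier W"
    using p q A_subset_W by auto
  show ?thesis
  proof (rule has_slope_one_in_T)
    show "has_slope (\<lambda>n. c' n * (a' n * (c n * a n))) (p \<otimes>\<^bsub>W\<^esub> q \<otimes>\<^bsub>W\<^esub> inv\<^bsub>W\<^esub> p \<otimes>\<^bsub>W\<^esub> inv\<^bsub>W\<^esub> q)"
      unfolding W_mult
      by (rule has_slope_comp[OF c(2) has_slope_comp[OF a(2) has_slope_comp[OF c(1) a(1)]]])
    fix n
    have "c' n * (a' n * (c n * a n)) = (a n * a' n) * (c n * c' n)"
      by (simp add: algebra_simps)
    then show "c' n * (a' n * (c n * a n)) mod 2 ^ n = 1 mod 2 ^ n"
      using mod_mult_cong[OF a_inverse[of n] c_inverse[of n]] by (simp only:) simp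
  qed (use W in simp)
qed

lemma T_commute: "s \<in> T \<Longrightarrow> t \<in> T \<Longrightarrow> s \<otimes>\<^bsub>W\<^esub> t = t \<otimes>\<^bsub>W\<^esub> s"
  unfolding T_iff by (auto simp: W_mult aff_comp add.commute)

lemma A_commute_tau_sq_in_T:
  assumes h: "h \<in> A"
    and commute: "h \<otimes>\<^bsub>W\<^esub> (tau \<otimes>\<^bsub>W\<^esub> tau) = (tau \<otimes>\<^bsub>W\<^esub> tau) \<otimes>\<^bsub>W\<^esub> h"
  shows "h \<in> T"
proof -
  obtain a e where a: "a \<in> Z2_units" and e: "e \<in> Z2" and h_aff: "h = aff a e"
    using h A_iff by blast
  have a_Z2: "a \<in> Z2" using Z2_units_Z2[OF a] .
  have "aff (\<lambda>_. 1) (\<lambda>_. 1) \<circ> aff (\<lambda>_. 1) (\<lambda>_. 1) \<circ> aff a e =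
    aff a e \<circ> (aff (\<lambda>_. 1) (\<lambda>_. 1) \<circ> aff (\<lambda>_. 1) (\<lambda>_. 1))"
    using commute by (simp only: W_mult h_aff tau_eq_aff)
  then have "(e n + 2) mod 2 ^ n = (2 * a n + e n) mod 2 ^ n" for n
    unfolding aff_comp aff_eq_iff by (simp add: algebra_simps)
  then have "(e n + 2 - e n) mod 2 ^ n = (2 * a n + e n - e n) mod 2 ^ n" for n
    by (rule mod_diff_cong) simp
  then have twice: "2 * a n mod 2 ^ n = 2 mod 2 ^ n" for n
    by simp
  have "a n mod 2 ^ n = 1 mod 2 ^ n" for n
  proof -
    have "2 * 2 ^ n dvd 2 * (a (Suc n) - 1)"
      using mod_eq_dvd_iff[THEN iffD1, OF twice[of "Suc n"]] by (simp add: right_diff_distrib)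
    then have "2 ^ n dvd a (Suc n) - 1"
      unfolding dvd_mult_cancel_left by simp
    then have "a (Suc n) mod 2 ^ n = 1 mod 2 ^ n"
      by (rule mod_eq_dvd_iff[THEN iffD2])
    then show ?thesis
      using Z2_coherent[OF a_Z2, of n] by simp
  qed
  then have "h = aff (\<lambda>_. 1) e"
    unfolding h_aff by (simp add: aff_eq_iff)
  then show ?thesis using e T_iff by blast
qed

lemma tau_sq_commutator: "\<exists>v\<in>A. tau \<otimes>\<^bsub>W\<^esub> tau = tau \<otimes>\<^bsub>W\<^esub> v \<otimes>\<^bsub>W\<^esub> inv\<^bsub>W\<^esub> tau \<otimes>\<^bsub>W\<^esub> inv\<^bsub>W\<^esub> v"
proof
  define v where "v = aff (\<lambda>_. -1) (\<lambda>_. 0)"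
  have "v = aff (z2_of_int (-1)) (z2_of_int 0)"
    by (simp add: v_def aff_eq_iff z2_of_int_def)
  then show v: "v \<in> A"
    unfolding A_iff using z2_of_int_unit[of "-1", simplified] z2_of_int_Z2 by blast
  have "v \<in> carrier W" using v A_subset_W by blast
  then have "inv\<^bsub>W\<^esub> v = aff (\<lambda>_. -1) (\<lambda>n. - ((-1) * 0))"
    unfolding v_def by (rule inv_W_aff) simp
  then have inv_v: "inv\<^bsub>W\<^esub> v = v"
    by (simp add: v_def)
  have "aff (\<lambda>_. 1) (\<lambda>_. 1) \<in> carrier W"
    using tau_in_T T_subset_A A_subset_W unfolding tau_eq_aff by blast
  then have inv_tau: "inv\<^bsub>W\<^esub> tau = aff (\<lambda>_. 1) (\<lambda>n. - (1 * 1))"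
    unfolding tau_eq_aff by (rule inv_W_aff) simp
  show "tau \<otimes>\<^bsub>W\<^esub> tau = tau \<otimes>\<^bsub>W\<^esub> v \<otimes>\<^bsub>W\<^esub> inv\<^bsub>W\<^esub> tau \<otimes>\<^bsub>W\<^esub> inv\<^bsub>W\<^esub> v"
    unfolding inv_v inv_tau unfolding tau_eq_aff v_def W_mult aff_comp by simp
qed

section \<open>The normalizers\<close>

lemma affine_if_conj_tau:
  assumes g: "g \<in> carrier W" and conj: "inv\<^bsub>W\<^esub> g \<otimes>\<^bsub>W\<^esub> tau \<otimes>\<^bsub>W\<^esub> g = aff (\<lambda>_. 1) b"
  shows "g = aff b (\<lambda>n. enc (g (dec n 0)))"
proof -
  have bij: "bij g" and length_g: "\<And>w. length (g w) = length w"
    using g by (auto simp: W_carrier_iff)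
  have g_tau: "g (tau w) = aff (\<lambda>_. 1) b (g w)" for w
    using fun_cong[OF conj, of "g w"] bij
    by (simp add: W_mult W_inv[OF g] bij_is_inj)
  have orbit: "enc (g (dec n (int k))) = (enc (g (dec n 0)) + int k * b n) mod 2 ^ n" for n k
  proof (induction k)
    case 0
    show ?case using enc_bounds[of "g (dec n 0)"] by (simp add: length_g)
  next
    case (Suc k)
    have "dec n (int (Suc k)) = tau (dec n (int k))"
      by (simp add: tau_eq_aff aff_def dec_eq_iff mod_simps add.commute)
    then have "enc (g (dec n (int (Suc k)))) = (enc (g (dec n (int k))) + b n) mod 2 ^ n"
      by (simp add: g_tau enc_aff length_g)
    also have "\<dots> = (enc (g (dec n 0)) + int (Suc k) * b n) mod 2 ^ n"
      unfolding Suc by (simp add: mod_simps algebra_simps)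
    finally show ?case .
  qed
  show ?thesis
  proof (rule aff_eqI)
    fix w :: "bool list"
    obtain k where k: "enc w = int k" using enc_bounds[of w] nonneg_int_cases by metis
    then have "g w = g (dec (length w) (int k))" by (metis dec_enc)
    then show "enc (g w) = (b (length w) * enc w + enc (g (dec (length w) 0))) mod 2 ^ length w"
      by (simp add: orbit k algebra_simps)
  qed (rule length_g)
qed

lemma conj_tau_in_T_imp_A:
  assumes g: "g \<in> carrier W"
    and "g \<otimes>\<^bsub>W\<^esub> tau \<otimes>\<^bsub>W\<^esub> inv\<^bsub>W\<^esub> g \<in> T" "inv\<^bsub>W\<^esub> g \<otimes>\<^bsub>W\<^esub> tau \<otimes>\<^bsub>W\<^esub> g \<in> T"
  shows "g \<in> A"
proof -
  obtain x where x: "x \<in> Z2" "g \<otimes>\<^bsub>W\<^esub> tau \<otimes>\<^bsub>W\<^esub> inv\<^bsub>W\<^esub> g = aff (\<lambda>_. 1) x"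
    using assms(2) T_iff by blast
  obtain b where b: "b \<in> Z2" "inv\<^bsub>W\<^esub> g \<otimes>\<^bsub>W\<^esub> tau \<otimes>\<^bsub>W\<^esub> g = aff (\<lambda>_. 1) b"
    using assms(3) T_iff by blast
  define c where "c n = enc (g (dec n 0))" for n
  have g_aff: "g = aff b c"
    using affine_if_conj_tau[OF g b(2)] unfolding c_def .
  have c: "c \<in> Z2"
    using W_orbit_Z2[OF g] unfolding c_def .
  have "tau \<circ> g = g \<circ> aff (\<lambda>_. 1) x"
  proof
    fix w
    have "g (aff (\<lambda>_. 1) x w) = g (inv_into UNIV g (tau (g w)))"
      using fun_cong[OF x(2), of w] by (simp add: W_mult W_inv[OF g])
    then show "(tau \<circ> g) w = (g \<circ> aff (\<lambda>_. 1) x) w"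
      using g by (simp add: W_carrier_iff bij_is_surj surj_f_inv_f)
  qed
  then have "(c n + 1) mod 2 ^ n = (b n * x n + c n) mod 2 ^ n" for n
    unfolding g_aff tau_eq_aff aff_comp aff_eq_iff by (simp add: add.commute)
  then have "(c n + 1 - c n) mod 2 ^ n = (b n * x n + c n - c n) mod 2 ^ n" for n
    by (rule mod_diff_cong) simp
  then have "b n * x n mod 2 ^ n = 1 mod 2 ^ n" for n
    by simp
  then have "b \<in> Z2_units"
    by (rule Z2_unitsI[OF b(1) x(1)])
  then show ?thesis
    unfolding A_iff g_aff using c by blast
qed

lemma normalizer_subset_A:
  assumes H: "H \<subseteq> carrier W"
    and conj: "\<And>g. g \<in> normalizer W H \<Longrightarrow> g \<otimes>\<^bsub>W\<^esub> tau \<otimes>\<^bsub>W\<^esub> inv\<^bsub>W\<^esub> g \<in> T"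
  shows "normalizer W H \<subseteq> A"
proof
  interpret W: group W by (rule group_W)
  fix g
  assume g: "g \<in> normalizer W H"
  have subgroup: "subgroup (normalizer W H) W"
    by (rule W.normalizer_imp_subgroup[OF H])
  have "g \<in> carrier W" "inv\<^bsub>W\<^esub> g \<in> normalizer W H"
    using subgroup.subset[OF subgroup] subgroup.m_inv_closed[OF subgroup g] g by auto
  then show "g \<in> A"
    using conj_tau_in_T_imp_A conj[OF g] conj[of "inv\<^bsub>W\<^esub> g"] by simp
qed

lemma normalizer_A_conj_tau:
  assumes g: "g \<in> normalizer W A"
  shows "g \<otimes>\<^bsub>W\<^esub> tau \<otimes>\<^bsub>W\<^esub> inv\<^bsub>W\<^esub> g \<in> T"
proof -
  interpret W: group W by (rule group_W)
  have subgroup: "subgroup (normalizer W A) W"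
    by (rule W.normalizer_imp_subgroup[OF A_subset_W])
  have gW: "g \<in> carrier W" and g': "inv\<^bsub>W\<^esub> g \<in> normalizer W A"
    using subgroup.subset[OF subgroup] subgroup.m_inv_closed[OF subgroup g] g by auto
  have tau: "tau \<in> A" "tau \<in> carrier W"
    using tau_in_T T_subset_A A_subset_W by auto
  obtain v where v: "v \<in> A" "v \<in> carrier W"
    and tau_sq: "tau \<otimes>\<^bsub>W\<^esub> tau = tau \<otimes>\<^bsub>W\<^esub> v \<otimes>\<^bsub>W\<^esub> inv\<^bsub>W\<^esub> tau \<otimes>\<^bsub>W\<^esub> inv\<^bsub>W\<^esub> v"
    using tau_sq_commutator A_subset_W by blast
  let ?conj = "\<lambda>x. inv\<^bsub>W\<^esub> g \<otimes>\<^bsub>W\<^esub> x \<otimes>\<^bsub>W\<^esub> inv\<^bsub>W\<^esub> (inv\<^bsub>W\<^esub> g)"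
  have "?conj (tau \<otimes>\<^bsub>W\<^esub> tau) =
      ?conj tau \<otimes>\<^bsub>W\<^esub> ?conj v \<otimes>\<^bsub>W\<^esub> inv\<^bsub>W\<^esub> (?conj tau) \<otimes>\<^bsub>W\<^esub> inv\<^bsub>W\<^esub> (?conj v)"
    unfolding tau_sq using W.conj_commutator[of "inv\<^bsub>W\<^esub> g" tau v] gW tau v by simp
  moreover have "?conj tau \<in> A" "?conj v \<in> A"
    using W.normalizer_conj_closed[OF A_subset_W g'] tau v by auto
  ultimately have "inv\<^bsub>W\<^esub> g \<otimes>\<^bsub>W\<^esub> (tau \<otimes>\<^bsub>W\<^esub> tau) \<otimes>\<^bsub>W\<^esub> g \<in> T"
    using commutator_in_T gW by simp
  then have "tau \<otimes>\<^bsub>W\<^esub> (inv\<^bsub>W\<^esub> g \<otimes>\<^bsub>W\<^esub> (tau \<otimes>\<^bsub>W\<^esub> tau) \<otimes>\<^bsub>W\<^esub> g) =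
      (inv\<^bsub>W\<^esub> g \<otimes>\<^bsub>W\<^esub> (tau \<otimes>\<^bsub>W\<^esub> tau) \<otimes>\<^bsub>W\<^esub> g) \<otimes>\<^bsub>W\<^esub> tau"
    using T_commute tau_in_T by blast
  then have "(g \<otimes>\<^bsub>W\<^esub> tau \<otimes>\<^bsub>W\<^esub> inv\<^bsub>W\<^esub> g) \<otimes>\<^bsub>W\<^esub> (tau \<otimes>\<^bsub>W\<^esub> tau) =
      (tau \<otimes>\<^bsub>W\<^esub> tau) \<otimes>\<^bsub>W\<^esub> (g \<otimes>\<^bsub>W\<^esub> tau \<otimes>\<^bsub>W\<^esub> inv\<^bsub>W\<^esub> g)"
    using W.conj_commute gW tau by simp
  moreover have "g \<otimes>\<^bsub>W\<^esub> tau \<otimes>\<^bsub>W\<^esub> inv\<^bsub>W\<^esub> g \<in> A"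
    using W.normalizer_conj_closed[OF A_subset_W g tau(1)] .
  ultimately show ?thesis
    using A_commute_tau_sq_in_T by blast
qed

theorem theorem4p13:
  shows "normalizer W T = A \<and> normalizer W A = A"
proof -
  interpret W: group W by (rule group_W)
  have T_W: "T \<subseteq> carrier W"
    using T_subset_A A_subset_W by blast
  have normalizer_T: "normalizer W T = A"
  proof
    show "normalizer W T \<subseteq> A"
      using normalizer_subset_A[OF T_W] W.normalizer_conj_closed[OF T_W _ tau_in_T] by blast
    show "A \<subseteq> normalizer W T"
      using W.normalizerI[OF T_W] A_conj_T A_subset_W by blast
  qed
  moreover have "normalizer W A = A"
  proof
    show "normalizer W A \<subseteq> A"
      using normalizer_subset_A[OF A_subset_W] normalizer_A_conj_tau by blast
    show "A \<subseteq> normalizer W A"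
      using W.subgroup_subset_normalizer W.normalizer_imp_subgroup[OF T_W] normalizer_T by simp
  qed
  ultimately show ?thesis ..
qed

end
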